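(* Let $K$ be a nilpotent group of class three, let $m\ge 2$ and let $y_1,\ldots,y_m$ be elements of $K$ which generate $K$ modulo $Z(K)$. Assume that $y_i^{2^{r_i}}\in Z(K)$ for each $i$, where $1\leq r_1\leq\cdots\leq r_{m-1}\leq r_m$ are integers. If there exist integers $0\leq\gamma_i<r_{m-1}$, $i=1,\ldots,m-1$, such that $[y_m,y_i]^{2^{\gamma_i}}$ commutes with both $y_i$ and $y_m$, then $y_m^{2^{r_{m-1}}}\in Z(K)$.
   Context: Commutators are $[x,y]=x^{-1}y^{-1}xy$, and are left-normed: $[x,y,z]=[[x,y],z]$. *)

theory Defs
  imports "HOL-Algebra.Algebra"
begin

definition comm :: "('a, 'b) monoid_scheme \<Rightarrow> 'a \<Rightarrow> 'a \<Rightarrow> 'a" where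
  "comm G x y = inv\<^bsub>G\<^esub> x \<otimes>\<^bsub>G\<^esub> inv\<^bsub>G\<^esub> y \<otimes>\<^bsub>G\<^esub> x \<otimes>\<^bsub>G\<^esub> y"

definition center :: "('a, 'b) monoid_scheme \<Rightarrow> 'a set" where
  "center G = {z \<in> carrier G. \<forall>g \<in> carrier G. z \<otimes>\<^bsub>G\<^esub> g = g \<otimes>\<^bsub>G\<^esub> z}"

text \<open>Lower central series: lcs G 0 = G (= gamma_1), lcs G (Suc n) = [lcs G n, G].\<close>
fun lcs :: "('a, 'b) monoid_scheme \<Rightarrow> nat \<Rightarrow> 'a set" where
  "lcs G 0 = carrier G"
| "lcs G (Suc n) = generate G {comm G x y | x y. x \<in> lcs G n \<and> y \<in> carrier G}"

definition nilpotent_of_class :: "('a, 'b) monoid_scheme \<Rightarrow> nat \<Rightarrow> bool" where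
  "nilpotent_of_class G c \<longleftrightarrow> lcs G c = {\<one>\<^bsub>G\<^esub>} \<and> lcs G (c - 1) \<noteq> {\<one>\<^bsub>G\<^esub>}"

end

theory Submission
  imports Defs
begin

text \<open>Put c = [y_m, y_i]. In class three every commutator [c, g] is central, so the
  Hall--Petresco formulas reduce to [b^n, a] = [b,a]^n [b,a,b]^(n choose 2) and
  [b, a^n] = [b,a]^n [b,a,a]^(n choose 2). As c^(2^gamma_i) commutes with y_i and y_m, both
  [c, y_m] and [c, y_i] have order dividing 2^gamma_i, which divides
  (2^s choose 2) * 2^(r_(m-1) - s) whenever 1 <= s <= r_(m-1). Hence
  [y_m^(2^r_(m-1)), y_i] = c^(2^r_(m-1)); and since y_i^(2^r_i) commutes with y_m,
  c^(2^r_i) = [c, y_i]^-(2^r_i choose 2), whose 2^(r_(m-1) - r_i)-th power is trivial.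
  So y_m^(2^r_(m-1)) commutes with every y_i and is therefore central.\<close>

lemma Suc_choose_two: "Suc n choose 2 = n + (n choose 2)"
  by (simp add: numeral_2_eq_2)

lemma choose_two_pow2_mult_dvd:
  assumes "g < R" "1 \<le> s" "s \<le> R"
  shows "(2::nat) ^ g dvd (2 ^ s choose 2) * 2 ^ (R - s)"
proof -
  have "(2::nat) ^ s = 2 * 2 ^ (s - 1)"
    using assms(2) by (metis Suc_diff_le diff_Suc_1 power_Suc)
  then have "(2 ^ s choose 2) * 2 ^ (R - s) = 2 ^ (s - 1 + (R - s)) * (2 ^ s - 1::nat)"
    by (simp add: choose_two power_add)
  moreover have "(2::nat) ^ g dvd 2 ^ (s - 1 + (R - s))"
    using assms by (intro le_imp_power_dvd) linarith
  ultimately show ?thesis by simp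
qed

lemma (in monoid) pow_eq_one_if_dvd:
  assumes "x \<in> carrier G" "x [^] (k::nat) = \<one>" "k dvd n"
  shows "x [^] n = \<one>"
  using assms by (metis dvdE nat_pow_one nat_pow_pow)

context group
begin

lemma mult_inv_cancel_left: "x \<in> carrier G \<Longrightarrow> y \<in> carrier G \<Longrightarrow> x \<otimes> (inv x \<otimes> y) = y"
  by (simp add: m_assoc[symmetric])

lemma inv_mult_cancel_left: "x \<in> carrier G \<Longrightarrow> y \<in> carrier G \<Longrightarrow> inv x \<otimes> (x \<otimes> y) = y"
  by (simp add: m_assoc[symmetric])

lemma comm_closed [simp]: "x \<in> carrier G \<Longrightarrow> y \<in> carrier G \<Longrightarrow> comm G x y \<in> carrier G"
  by (simp add: comm_def)

lemma comm_eq_one_iff: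
  assumes "x \<in> carrier G" "y \<in> carrier G"
  shows "comm G x y = \<one> \<longleftrightarrow> x \<otimes> y = y \<otimes> x"
proof -
  have "comm G x y = inv (y \<otimes> x) \<otimes> (x \<otimes> y)"
    using assms by (simp add: comm_def m_assoc inv_mult_group)
  then show ?thesis
    using assms by (metis inv_closed inv_equality inv_inv m_closed r_inv)
qed

lemma comm_mult_left:
  "x \<in> carrier G \<Longrightarrow> y \<in> carrier G \<Longrightarrow> z \<in> carrier G \<Longrightarrow>
    comm G (x \<otimes> y) z = comm G x z \<otimes> comm G (comm G x z) y \<otimes> comm G y z"
  by (simp add: comm_def m_assoc inv_mult_group mult_inv_cancel_left inv_mult_cancel_left)

lemma comm_mult_right:
  "x \<in> carrier G \<Longrightarrow> y \<in> carrier G \<Longrightarrow> z \<in> carrier G \<Longrightarrow>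
    comm G x (y \<otimes> z) = comm G x z \<otimes> comm G x y \<otimes> comm G (comm G x y) z"
  by (simp add: comm_def m_assoc inv_mult_group mult_inv_cancel_left inv_mult_cancel_left)

lemma commutes_with_generate:
  assumes "z \<in> carrier G" "S \<subseteq> carrier G" "\<forall>s\<in>S. z \<otimes> s = s \<otimes> z" "h \<in> generate G S"
  shows "z \<otimes> h = h \<otimes> z"
  using assms(4)
proof (induction rule: generate.induct)
  case one
  then show ?case using assms(1) by simp
next
  case (incl h)
  then show ?case using assms(3) by blast
next
  case (inv h)
  then have h: "h \<in> carrier G" using assms(2) by blast
  have "inv h \<otimes> (z \<otimes> h) \<otimes> inv h = inv h \<otimes> (h \<otimes> z) \<otimes> inv h"
    using inv assms(3) by simp
  then show ?case
    using h assms(1) by (simp add: m_assoc mult_inv_cancel_left inv_mult_cancel_left)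
next
  case (eng h1 h2)
  have "h1 \<in> carrier G" "h2 \<in> carrier G"
    using eng(1,2) generate_in_carrier[OF assms(2)] by auto
  with eng assms(1) show ?case by (metis m_assoc)
qed

lemma mem_center_if_commutes_with_generators:
  assumes "z \<in> carrier G" "S \<subseteq> carrier G" "generate G (S \<union> center G) = carrier G"
    and "\<forall>s\<in>S. z \<otimes> s = s \<otimes> z"
  shows "z \<in> center G"
proof -
  have "S \<union> center G \<subseteq> carrier G"
    using assms(2) by (auto simp: center_def)
  moreover have "\<forall>s\<in>S \<union> center G. z \<otimes> s = s \<otimes> z"
    using assms(1,4) by (auto simp: center_def)
  ultimately have "\<forall>h\<in>carrier G. z \<otimes> h = h \<otimes> z"
    using commutes_with_generate[OF assms(1)] assms(3) by blast
  with assms(1) show ?thesis by (simp add: center_def)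
qed

end

locale class_le3_group = group +
  assumes comm3_eq_one: "\<And>x y z w. x \<in> carrier G \<Longrightarrow> y \<in> carrier G \<Longrightarrow> z \<in> carrier G \<Longrightarrow>
    w \<in> carrier G \<Longrightarrow> comm G (comm G (comm G x y) z) w = \<one>"

lemma comm_mem_lcs_Suc: "x \<in> lcs G n \<Longrightarrow> y \<in> carrier G \<Longrightarrow> comm G x y \<in> lcs G (Suc n)"
  by (auto intro: generate.incl)

lemma nilpotent_of_class_3_imp_class_le3_group:
  fixes G (structure)
  assumes "group G" "nilpotent_of_class G 3"
  shows "class_le3_group G"
proof -
  interpret group G by fact
  show ?thesis
  proof
    fix x y z w
    assume "x \<in> carrier G" "y \<in> carrier G" "z \<in> carrier G" "w \<in> carrier G"
    then have "comm G (comm G (comm G x y) z) w \<in> lcs G (Suc (Suc (Suc 0)))"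
      by (intro comm_mem_lcs_Suc) simp_all
    then show "comm G (comm G (comm G x y) z) w = \<one>"
      using assms(2) by (simp add: nilpotent_of_class_def numeral_3_eq_3)
  qed
qed

context class_le3_group
begin

lemma comm2_central:
  "x \<in> carrier G \<Longrightarrow> y \<in> carrier G \<Longrightarrow> z \<in> carrier G \<Longrightarrow> w \<in> carrier G \<Longrightarrow>
    comm G (comm G x y) z \<otimes> w = w \<otimes> comm G (comm G x y) z"
  using comm3_eq_one comm_eq_one_iff by simp

lemma comm2_pow_right:
  assumes "p \<in> carrier G" "q \<in> carrier G" "g \<in> carrier G"
  shows "comm G (comm G p q) (g [^] (n::nat)) = comm G (comm G p q) g [^] n"
proof (induction n)
  case 0
  show ?case using assms by (simp add: comm_def m_assoc)
next
  case (Suc n)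
  have "comm G (comm G p q) (g [^] Suc n) = comm G (comm G p q) g \<otimes> comm G (comm G p q) (g [^] n)"
    using assms comm_mult_right[of "comm G p q" "g [^] n" g] comm3_eq_one by simp
  also have "\<dots> = comm G (comm G p q) g [^] Suc n"
    using Suc assms by (metis comm_closed nat_pow_Suc2)
  finally show ?case .
qed

lemma comm2_pow_left:
  assumes "p \<in> carrier G" "q \<in> carrier G" "g \<in> carrier G"
  shows "comm G (comm G p q [^] (n::nat)) g = comm G (comm G p q) g [^] n"
proof (induction n)
  case 0
  show ?case using assms by (simp add: comm_def m_assoc)
next
  case (Suc n)
  have "comm G (comm G p q [^] Suc n) g = comm G (comm G p q \<otimes> comm G p q [^] n) g"
    using assms by (metis comm_closed nat_pow_Suc2)
  also have "\<dots> = comm G (comm G p q) g \<otimes> comm G (comm G p q [^] n) g"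
    using assms comm_mult_left[of "comm G p q" "comm G p q [^] n" g] comm3_eq_one by simp
  also have "\<dots> = comm G (comm G p q) g [^] Suc n"
    using Suc assms by (metis comm_closed nat_pow_Suc2)
  finally show ?case .
qed

lemma comm_pow_left:
  assumes "p \<in> carrier G" "g \<in> carrier G"
  shows "comm G (g [^] n) p = comm G g p [^] n \<otimes> comm G (comm G g p) g [^] (n choose 2)"
proof (induction n)
  case 0
  show ?case using assms by (simp add: comm_def m_assoc binomial_eq_0)
next
  case (Suc n)
  let ?c = "comm G g p"
  let ?e = "comm G ?c g"
  have "comm G (g [^] Suc n) p = comm G (g \<otimes> g [^] n) p"
    using assms by (metis nat_pow_Suc2)
  also have "\<dots> = ?c \<otimes> comm G ?c (g [^] n) \<otimes> comm G (g [^] n) p"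
    using assms comm_mult_left by simp
  also have "\<dots> = ?c \<otimes> (comm G ?c (g [^] n) \<otimes> ?c [^] n) \<otimes> ?e [^] (n choose 2)"
    using assms Suc by (simp add: m_assoc)
  also have "\<dots> = ?c \<otimes> (?c [^] n \<otimes> comm G ?c (g [^] n)) \<otimes> ?e [^] (n choose 2)"
    using assms comm2_central by simp
  also have "\<dots> = (?c \<otimes> ?c [^] n) \<otimes> (?e [^] n \<otimes> ?e [^] (n choose 2))"
    using assms comm2_pow_right by (simp add: m_assoc)
  also have "\<dots> = ?c [^] Suc n \<otimes> ?e [^] (Suc n choose 2)"
    using assms by (metis Suc_choose_two comm_closed nat_pow_Suc2 nat_pow_mult)
  finally show ?case .
qed

lemma comm_pow_right:
  assumes "p \<in> carrier G" "g \<in> carrier G"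
  shows "comm G p (g [^] n) = comm G p g [^] n \<otimes> comm G (comm G p g) g [^] (n choose 2)"
proof (induction n)
  case 0
  show ?case using assms by (simp add: comm_def m_assoc binomial_eq_0)
next
  case (Suc n)
  let ?c = "comm G p g"
  let ?f = "comm G ?c g"
  have "comm G p (g [^] Suc n) = comm G p (g \<otimes> g [^] n)"
    using assms by (metis nat_pow_Suc2)
  also have "\<dots> = comm G p (g [^] n) \<otimes> ?c \<otimes> comm G ?c (g [^] n)"
    using assms comm_mult_right by simp
  also have "\<dots> = ?c [^] n \<otimes> (?f [^] (n choose 2) \<otimes> ?c) \<otimes> ?f [^] n"
    using assms Suc comm2_pow_right by (simp add: m_assoc)
  also have "\<dots> = ?c [^] n \<otimes> (?c \<otimes> ?f [^] (n choose 2)) \<otimes> ?f [^] n"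
    using assms comm2_central group_commutes_pow by simp
  also have "\<dots> = (?c [^] n \<otimes> ?c) \<otimes> (?f [^] n \<otimes> ?f [^] (n choose 2))"
    using assms by (simp add: m_assoc nat_pow_comm)
  also have "\<dots> = ?c [^] Suc n \<otimes> ?f [^] (Suc n choose 2)"
    using assms by (simp add: Suc_choose_two nat_pow_mult)
  finally show ?case .
qed

lemma comm2_pow_eq_one:
  assumes "p \<in> carrier G" "q \<in> carrier G" "g \<in> carrier G"
    and "comm G p q [^] (k::nat) \<otimes> g = g \<otimes> comm G p q [^] k"
  shows "comm G (comm G p q) g [^] k = \<one>"
  using assms comm_eq_one_iff[of "comm G p q [^] k" g] comm2_pow_left by simp

lemma pow_two_power_commutes:
  assumes a: "a \<in> carrier G" and b: "b \<in> carrier G"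
    and a_pow: "a [^] (2::nat) ^ s \<otimes> b = b \<otimes> a [^] (2::nat) ^ s"
    and s: "1 \<le> s" "s \<le> R" and g: "g < R"
    and c_pow_a: "comm G b a [^] (2::nat) ^ g \<otimes> a = a \<otimes> comm G b a [^] (2::nat) ^ g"
    and c_pow_b: "comm G b a [^] (2::nat) ^ g \<otimes> b = b \<otimes> comm G b a [^] (2::nat) ^ g"
  shows "b [^] (2::nat) ^ R \<otimes> a = a \<otimes> b [^] (2::nat) ^ R"
proof -
  define c where "c = comm G b a"
  define e where "e = comm G c b"
  define f where "f = comm G c a"
  have c: "c \<in> carrier G" and e: "e \<in> carrier G" and f: "f \<in> carrier G"
    using a b by (simp_all add: c_def e_def f_def)
  have e_pow: "e [^] (2::nat) ^ g = \<one>"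
    using comm2_pow_eq_one[OF b a b c_pow_b] by (simp add: c_def e_def)
  have f_pow: "f [^] (2::nat) ^ g = \<one>"
    using comm2_pow_eq_one[OF b a a c_pow_a] by (simp add: c_def f_def)
  have "comm G (b [^] (2::nat) ^ R) a = c [^] (2::nat) ^ R \<otimes> e [^] ((2::nat) ^ R choose 2)"
    using comm_pow_left[OF a b] by (simp add: c_def e_def)
  also have "e [^] ((2::nat) ^ R choose 2) = \<one>"
    using pow_eq_one_if_dvd[OF e e_pow] choose_two_pow2_mult_dvd[of g R R] s g by simp
  finally have comm_b_pow: "comm G (b [^] (2::nat) ^ R) a = c [^] (2::nat) ^ R"
    using c by simp
  have "c [^] (2::nat) ^ s \<otimes> f [^] ((2::nat) ^ s choose 2) = comm G b (a [^] (2::nat) ^ s)"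
    using comm_pow_right[OF b a] by (simp add: c_def f_def)
  also have "\<dots> = \<one>"
    using comm_eq_one_iff[of b "a [^] (2::nat) ^ s"] a b a_pow by simp
  finally have "c [^] (2::nat) ^ s = inv (f [^] ((2::nat) ^ s choose 2))"
    using c f by (metis inv_equality nat_pow_closed inv_inv)
  moreover have "c [^] (2::nat) ^ R = (c [^] (2::nat) ^ s) [^] (2::nat) ^ (R - s)"
    using c s by (simp add: nat_pow_pow power_add[symmetric])
  ultimately have "c [^] (2::nat) ^ R = inv (f [^] (((2::nat) ^ s choose 2) * 2 ^ (R - s)))"
    using f by (simp add: nat_pow_pow nat_pow_inv)
  also have "f [^] (((2::nat) ^ s choose 2) * 2 ^ (R - s)) = \<one>"
    using pow_eq_one_if_dvd[OF f f_pow] choose_two_pow2_mult_dvd[OF g s] by simp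
  finally have "comm G (b [^] (2::nat) ^ R) a = \<one>"
    using comm_b_pow by simp
  then show ?thesis
    using comm_eq_one_iff a b by simp
qed

end

theorem lemma2p4:
  fixes K (structure) and m :: nat and y :: "nat \<Rightarrow> 'a" and r :: "nat \<Rightarrow> nat"
    and \<gamma> :: "nat \<Rightarrow> nat"
  assumes "group K"
    and "nilpotent_of_class K 3"
    and "m \<ge> 2"
    and "\<forall>i\<in>{1..m}. y i \<in> carrier K"
    and "generate K (y ` {1..m} \<union> center K) = carrier K"
    and "\<forall>i\<in>{1..m}. y i [^] ((2::nat) ^ r i) \<in> center K"
    and "\<forall>i\<in>{1..m}. 1 \<le> r i"
    and "\<forall>i j. 1 \<le> i \<and> i \<le> j \<and> j \<le> m \<longrightarrow> r i \<le> r j"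
    and "\<forall>i\<in>{1..m-1}. \<gamma> i < r (m - 1)"
    and "\<forall>i\<in>{1..m-1}.
           comm K (y m) (y i) [^] ((2::nat) ^ \<gamma> i) \<otimes> y i = y i \<otimes> comm K (y m) (y i) [^] ((2::nat) ^ \<gamma> i)
         \<and> comm K (y m) (y i) [^] ((2::nat) ^ \<gamma> i) \<otimes> y m = y m \<otimes> comm K (y m) (y i) [^] ((2::nat) ^ \<gamma> i)"
  shows "y m [^] ((2::nat) ^ r (m - 1)) \<in> center K"
proof -
  interpret class_le3_group K
    using assms(1,2) by (rule nilpotent_of_class_3_imp_class_le3_group)
  have y: "y i \<in> carrier K" if "i \<in> {1..m}" for i
    using assms(4) that by blast
  have "y m \<in> carrier K"
    using y assms(3) by simp
  moreover have "y m [^] (2::nat) ^ r (m - 1) \<otimes> y i = y i \<otimes> y m [^] (2::nat) ^ r (m - 1)"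
    if i: "i \<in> {1..m}" for i
  proof (cases "i = m")
    case True
    with \<open>y m \<in> carrier K\<close> show ?thesis by (simp add: group_commutes_pow)
  next
    case False
    with i have "i \<in> {1..m-1}" by auto
    moreover have "y i [^] (2::nat) ^ r i \<otimes> y m = y m \<otimes> y i [^] (2::nat) ^ r i"
      using assms(6) i \<open>y m \<in> carrier K\<close> by (auto simp: center_def)
    ultimately show ?thesis
      using assms(7-10) i
      by (intro pow_two_power_commutes[OF y[OF i] \<open>y m \<in> carrier K\<close>, where g = "\<gamma> i"]) auto
  qed
  ultimately show ?thesis
    using assms(4,5) by (intro mem_center_if_commutes_with_generators[where S = "y ` {1..m}"]) auto
qed

end
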